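(* Let $G=(V,E)$ be a graph. For every $v\in V$ the relation $\prec_v$ on $V$ is a strict weak order, i.e., it is irreflexive and transitive and incomparability with respect to $\prec_v$ is transitive.
   Context: Graphs are finite, simple, undirected, with nonempty vertex set. A module of $G=(V,E)$ is a nonempty $M\subseteq V$ such that every $u\in V\setminus M$ is adjacent either to all or to none of the vertices of $M$. For $v,w\in V$, $M_{v,w}$ is the intersection of all modules of $G$ containing both $v$ and $w$. For $v\in V$, the relation $\prec_v$ on $V$ is defined by $w_1\prec_v w_2$ iff $M_{v,w_2}\subsetneq M_{v,w_1}$. Elements $a,b$ are incomparable w.r.t. $\prec_v$ if neither $a\prec_v b$ nor $b\prec_v a$. *)

theory Defs
  imports Main
begin

definition graph :: "'a set \<Rightarrow> ('a \<Rightarrow> 'a \<Rightarrow> bool) \<Rightarrow> bool" where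
  "graph V E \<longleftrightarrow> finite V \<and> V \<noteq> {} \<and>
     (\<forall>u v. E u v \<longrightarrow> u \<in> V \<and> v \<in> V) \<and>
     (\<forall>u v. E u v \<longrightarrow> E v u) \<and> (\<forall>v. \<not> E v v)"

definition is_module :: "'a set \<Rightarrow> ('a \<Rightarrow> 'a \<Rightarrow> bool) \<Rightarrow> 'a set \<Rightarrow> bool" where
  "is_module V E M \<longleftrightarrow> M \<noteq> {} \<and> M \<subseteq> V \<and>
     (\<forall>u \<in> V - M. (\<forall>x \<in> M. E u x) \<or> (\<forall>x \<in> M. \<not> E u x))"

definition Mvw :: "'a set \<Rightarrow> ('a \<Rightarrow> 'a \<Rightarrow> bool) \<Rightarrow> 'a \<Rightarrow> 'a \<Rightarrow> 'a set" where
  "Mvw V E v w = \<Inter> {M. is_module V E M \<and> v \<in> M \<and> w \<in> M}"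

definition prec_v :: "'a set \<Rightarrow> ('a \<Rightarrow> 'a \<Rightarrow> bool) \<Rightarrow> 'a \<Rightarrow> 'a \<Rightarrow> 'a \<Rightarrow> bool" where
  "prec_v V E v w1 w2 \<longleftrightarrow> w1 \<in> V \<and> w2 \<in> V \<and> Mvw V E v w2 \<subset> Mvw V E v w1"

definition incomparable_v :: "'a set \<Rightarrow> ('a \<Rightarrow> 'a \<Rightarrow> bool) \<Rightarrow> 'a \<Rightarrow> 'a \<Rightarrow> 'a \<Rightarrow> bool" where
  "incomparable_v V E v a b \<longleftrightarrow> \<not> prec_v V E v a b \<and> \<not> prec_v V E v b a"

end

theory Submission
  imports Defs
begin

text \<open>Only transitivity of incomparability needs an argument. Suppose a and b, and b and c,
  are incomparable, but M_{v,a} \<subset> M_{v,c}. Minimality of these modules forces c \<notin> M_{v,a},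
  a \<notin> M_{v,b} and b \<notin> M_{v,c}. Then (M_{v,c} - M_{v,a}) \<union> (M_{v,a} \<inter> M_{v,b}) is again
  a module; it contains v and c, hence all of M_{v,c}, yet it misses a \<in> M_{v,c}.\<close>

lemma is_module_iff:
  "is_module V E M \<longleftrightarrow> M \<noteq> {} \<and> M \<subseteq> V \<and>
     (\<forall>u \<in> V - M. \<forall>x \<in> M. \<forall>y \<in> M. E u x = E u y)"
  unfolding is_module_def by blast

lemma is_moduleD:
  "is_module V E M \<Longrightarrow> u \<in> V \<Longrightarrow> u \<notin> M \<Longrightarrow> x \<in> M \<Longrightarrow> y \<in> M \<Longrightarrow> E u x = E u y"
  unfolding is_module_iff by blast

lemma is_module_subset: "is_module V E M \<Longrightarrow> M \<subseteq> V"
  unfolding is_module_def by blast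

lemma graph_sym: "graph V E \<Longrightarrow> E x y = E y x"
  unfolding graph_def by blast

lemma is_module_diff_union_inter:
  assumes sym: "\<And>x y. E x y = E y x"
    and A: "is_module V E A" and B: "is_module V E B" and C: "is_module V E C"
    and "A \<subseteq> C" and v: "v \<in> A \<inter> B" and b: "b \<in> B - C"
  shows "is_module V E ((C - A) \<union> (A \<inter> B))" (is "is_module V E ?S")
  unfolding is_module_iff
proof (intro conjI ballI)
  show "?S \<noteq> {}" using v by blast
  show "?S \<subseteq> V" using is_module_subset[OF C] \<open>A \<subseteq> C\<close> by blast
  fix u x y assume u: "u \<in> V - ?S" and x: "x \<in> ?S" and y: "y \<in> ?S"
  show "E u x = E u y"
  proof (cases "u \<in> C")
    case False
    then show ?thesis using is_moduleD[OF C, of u x y] u x y \<open>A \<subseteq> C\<close> by blast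
  next
    case True
    with u have uA: "u \<in> A" and uB: "u \<notin> B" by auto
    have "E u z = E u b" if z: "z \<in> ?S" for z
    proof (cases "z \<in> B")
      case True
      then show ?thesis using is_moduleD[OF B, of u z b] uB u b by blast
    next
      case False
      with z have z: "z \<in> C" "z \<notin> A" "z \<notin> B" by auto
      have zV: "z \<in> V" using z is_module_subset[OF C] by blast
      have "E z u = E z v" using is_moduleD[OF A, of z u v] z zV uA v by blast
      also have "\<dots> = E z b" using is_moduleD[OF B, of z v b] z zV v b by blast
      also have "\<dots> = E u b"
        using is_moduleD[OF C, of b z u] z \<open>u \<in> C\<close> b is_module_subset[OF B] sym by blast
      finally show ?thesis using sym by metis
    qed
    then show ?thesis using x y by metis
  qed
qed

lemma Mvw_least: "is_module V E M \<Longrightarrow> v \<in> M \<Longrightarrow> w \<in> M \<Longrightarrow> Mvw V E v w \<subseteq> M"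
  unfolding Mvw_def by blast

lemma
  assumes "v \<in> V" "w \<in> V"
  shows Mvw_is_module: "is_module V E (Mvw V E v w)"
    and left_in_Mvw: "v \<in> Mvw V E v w"
    and right_in_Mvw: "w \<in> Mvw V E v w"
proof -
  let ?F = "{M. is_module V E M \<and> v \<in> M \<and> w \<in> M}"
  have "V \<in> ?F" using assms unfolding is_module_def by blast
  then have sub: "Mvw V E v w \<subseteq> V" unfolding Mvw_def by blast
  show v: "v \<in> Mvw V E v w" and "w \<in> Mvw V E v w" unfolding Mvw_def by auto
  show "is_module V E (Mvw V E v w)"
    unfolding is_module_iff
  proof (intro conjI ballI)
    show "Mvw V E v w \<noteq> {}" using v by blast
    show "Mvw V E v w \<subseteq> V" by (rule sub)
    fix u x y assume u: "u \<in> V - Mvw V E v w" and x: "x \<in> Mvw V E v w" and y: "y \<in> Mvw V E v w"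
    then obtain M where M: "M \<in> ?F" "u \<notin> M" unfolding Mvw_def by blast
    with x y have "x \<in> M" "y \<in> M" unfolding Mvw_def by blast+
    then show "E u x = E u y" using is_moduleD[of V E M u x y] M u by blast
  qed
qed

lemma Mvw_subset_if_mem:
  "v \<in> V \<Longrightarrow> u \<in> V \<Longrightarrow> w \<in> Mvw V E v u \<Longrightarrow> Mvw V E v w \<subseteq> Mvw V E v u"
  using Mvw_least[OF Mvw_is_module left_in_Mvw] .

lemma incomparable_v_iff:
  "a \<in> V \<Longrightarrow> b \<in> V \<Longrightarrow> incomparable_v V E v a b \<longleftrightarrow>
     \<not> Mvw V E v a \<subset> Mvw V E v b \<and> \<not> Mvw V E v b \<subset> Mvw V E v a"
  unfolding incomparable_v_def prec_v_def by blast

lemma not_Mvw_psubset_if_incomparable_chain: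
  assumes "graph V E" and V: "v \<in> V" "a \<in> V" "b \<in> V" "c \<in> V"
    and ab: "incomparable_v V E v a b" and bc: "incomparable_v V E v b c"
  shows "\<not> Mvw V E v a \<subset> Mvw V E v c"
proof
  let ?A = "Mvw V E v a" and ?B = "Mvw V E v b" and ?C = "Mvw V E v c"
  assume AC: "?A \<subset> ?C"
  have AB: "\<not> ?A \<subset> ?B" "\<not> ?B \<subset> ?A" using ab unfolding incomparable_v_iff[OF V(2,3)] by simp_all
  have BC: "\<not> ?B \<subset> ?C" "\<not> ?C \<subset> ?B" using bc unfolding incomparable_v_iff[OF V(3,4)] by simp_all
  have "c \<notin> ?A" using Mvw_subset_if_mem[OF V(1,2), of c E] AC by blast
  have "a \<notin> ?B" using Mvw_subset_if_mem[OF V(1,3), of a E] AB(1) AC BC(1) by blast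
  have "b \<notin> ?C" using Mvw_subset_if_mem[OF V(1,4), of b E] BC(1) AC AB(1) by blast
  have vAB: "v \<in> ?A \<inter> ?B" using left_in_Mvw[OF V(1,2)] left_in_Mvw[OF V(1,3)] by blast
  have "b \<in> ?B - ?C" using right_in_Mvw[OF V(1,3)] \<open>b \<notin> ?C\<close> by blast
  with vAB AC have "is_module V E ((?C - ?A) \<union> (?A \<inter> ?B))"
    by (intro is_module_diff_union_inter[OF graph_sym[OF \<open>graph V E\<close>]
        Mvw_is_module[OF V(1,2)] Mvw_is_module[OF V(1,3)] Mvw_is_module[OF V(1,4)]]) auto
  moreover have "c \<in> ?C - ?A" using right_in_Mvw[OF V(1,4)] \<open>c \<notin> ?A\<close> by blast
  ultimately have "?C \<subseteq> (?C - ?A) \<union> (?A \<inter> ?B)" using vAB by (intro Mvw_least) auto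
  then show False using right_in_Mvw[OF V(1,2)] AC \<open>a \<notin> ?B\<close> by blast
qed

theorem lemma3p13:
  assumes "graph V E" and "v \<in> V"
  shows "(\<forall>w \<in> V. \<not> prec_v V E v w w)
       \<and> (\<forall>a \<in> V. \<forall>b \<in> V. \<forall>c \<in> V.
            prec_v V E v a b \<longrightarrow> prec_v V E v b c \<longrightarrow> prec_v V E v a c)
       \<and> (\<forall>a \<in> V. \<forall>b \<in> V. \<forall>c \<in> V.
            incomparable_v V E v a b \<longrightarrow> incomparable_v V E v b c \<longrightarrow> incomparable_v V E v a c)"
proof (intro conjI ballI impI)
  fix w show "\<not> prec_v V E v w w" unfolding prec_v_def by blast
next
  fix a b c assume "prec_v V E v a b" "prec_v V E v b c"
  then show "prec_v V E v a c" unfolding prec_v_def by blast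
next
  fix a b c assume V: "a \<in> V" "b \<in> V" "c \<in> V"
    and ab: "incomparable_v V E v a b" and bc: "incomparable_v V E v b c"
  then have "incomparable_v V E v c b" "incomparable_v V E v b a"
    unfolding incomparable_v_def by blast+
  then have "\<not> Mvw V E v c \<subset> Mvw V E v a"
    by (rule not_Mvw_psubset_if_incomparable_chain[OF assms V(3,2,1)])
  with not_Mvw_psubset_if_incomparable_chain[OF assms V ab bc]
  show "incomparable_v V E v a c" unfolding incomparable_v_iff[OF V(1,3)] by blast
qed

end
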